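(* Let $d\ge2$. Let $\mathcal P$ be the set of equivalence classes of $\partial\mathbb Z^{d-1}_{\ge1}$ under the relation $x\sim y$ iff the conditional law of $W_1-W_0$ given $W_0=x$ equals that given $W_0=y$, for the gap process of the SBBS with capacity $c=\infty$ and some error probability $\varepsilon_0\in(0,1)$. Then: (0) $\mathcal P=\{p_1,\dots,p_k\}$ is finite and does not depend on the choice of $\varepsilon_0\in(0,1)$; moreover for every $\varepsilon\in(0,1)$ and every capacity $c\in\{1,2,\dots\}\cup\{\infty\}$ the transition kernel of the gap process is homogeneous on each cell $p_j$, i.e. the conditional law of $W_1-W_0$ given $W_0=x$ is the same for all $x\in p_j$; (i) for each $j$ there exist $x^j\in\partial\mathbb Z^{d-1}_{\ge1}$ and a nonempty $I^j\subseteq\{1,\dots,d-1\}$ with $x^j_i=1$ for $i<\min I^j$, $x^j_{\min I^j}=0$, and $p_j=\{y\in\partial\mathbb Z^{d-1}_{\ge1}: y_i=x^j_i\ (i\in I^j),\ y_i\ge x^j_i\ (i\notin I^j)\}$; (ii) after re-indexing, for each $j\in\{1,\dots,d-1\}$, $p_j=\{y\in\partial\mathbb Z^{d-1}_{\ge1}: y_j=0,\ y_{j+1}\ge2,\ y_i\ge1\text{ for }i\notin\{j,j+1\}\}$ (the condition on $y_{j+1}$ being void when $j=d-1$); (iii) if $c\ge d$, then for any $\varepsilon\in(0,1)$ the transition kernels at points of distinct cells are distinct.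
   Context: Stochastic box-ball system (SBBS). Fix an error probability $\varepsilon\in[0,1]$ and a capacity $c\in\{1,2,\dots\}\cup\{\infty\}$. A configuration is $\zeta\in\{0,1\}^{\mathbb N}$, $\mathbb N=\{1,2,\dots\}$, with finitely many $1$'s (balls). Given $\zeta$, the stochastic carrier process $\Gamma$ is defined by $\Gamma(0)=0$ and recursively (with fresh independent randomness at each $k$): $\Gamma(k)=\Gamma(k-1)+1$ with probability $1-\varepsilon$ (and $\Gamma(k)=\Gamma(k-1)$ otherwise) if $\zeta(k)=1$ and $\Gamma(k-1)<c$; $\Gamma(k)=\Gamma(k-1)-1$ if $\zeta(k)=0$ and $\Gamma(k-1)\ge1$; $\Gamma(k)=\Gamma(k-1)$ otherwise. The new configuration is $\zeta'(k)=\mathbf 1(\Gamma(k)-\Gamma(k-1)=-1)+\mathbf 1(\Gamma(k)=\Gamma(k-1),\ \zeta(k)=1)$. Iterating independently gives the SBBS trajectory. With $d$ balls at positions $\zeta^{(1)}_t<\dots<\zeta^{(d)}_t$, the gap process is $W_t=(W^1_t,\dots,W^{d-1}_t)$, $W^i_t=\zeta^{(i+1)}_t-\zeta^{(i)}_t-1$, a time-homogeneous Markov chain on $\mathbb Z^{d-1}_{\ge0}$ (its transition law is translation invariant in the ball configuration, so depends only on the current gap vector). $\partial\mathbb Z^{d-1}_{\ge1}:=\mathbb Z^{d-1}_{\ge0}\setminus\mathbb Z^{d-1}_{\ge1}$ (gap vectors with at least one zero coordinate). *)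

theory Defs
  imports "HOL-Probability.Probability_Mass_Function" "HOL-Library.Extended_Nat"
begin

text \<open>One step of the stochastic box-ball system, run on a finite 0/1 word
  (True = ball).  Argument g is the current carrier load Gamma(k-1),
  c the capacity (enat, infinity allowed), eps the error probability.\<close>
fun sbbs_run :: "real \<Rightarrow> enat \<Rightarrow> nat \<Rightarrow> bool list \<Rightarrow> bool list pmf" where
  "sbbs_run eps c g [] = return_pmf []"
| "sbbs_run eps c g (True # xs) =
     (if enat g < c then
        bind_pmf (bernoulli_pmf (1 - eps)) (\<lambda>b.
          if b then map_pmf (Cons False) (sbbs_run eps c (Suc g) xs)
          else map_pmf (Cons True) (sbbs_run eps c g xs))
      else map_pmf (Cons True) (sbbs_run eps c g xs))"
| "sbbs_run eps c g (False # xs) =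
     (if 1 \<le> g then map_pmf (Cons True) (sbbs_run eps c (g - 1) xs)
      else map_pmf (Cons False) (sbbs_run eps c g xs))"

text \<open>Configuration with gap vector x (length d-1): first ball at the first site,
  then consecutive balls separated by x!0, x!1, ... empty sites; followed by
  d = length x + 1 empty sites, which suffice for the carrier (load at most d)
  to unload, so every later site of the new configuration is empty.\<close>
definition config_of_gaps :: "nat list \<Rightarrow> bool list" where
  "config_of_gaps x = True # concat (map (\<lambda>g. replicate g False @ [True]) x)
                      @ replicate (length x + 1) False"

definition ball_positions :: "bool list \<Rightarrow> nat list" where
  "ball_positions w = filter (\<lambda>i. w ! i) [0..<length w]"

definition gaps_of :: "bool list \<Rightarrow> nat list" where
  "gaps_of w = (let ps = ball_positions w in map2 (\<lambda>a b. b - a - 1) ps (tl ps))"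

text \<open>Law of the increment W_1 - W_0 given W_0 = x, for error probability eps
  and capacity c (translation invariance: any configuration with gap vector x
  gives the same law).\<close>
definition gap_kernel :: "real \<Rightarrow> enat \<Rightarrow> nat list \<Rightarrow> int list pmf" where
  "gap_kernel eps c x =
     map_pmf (\<lambda>w. map2 (\<lambda>a b. int a - int b) (gaps_of w) x)
             (sbbs_run eps c 0 (config_of_gaps x))"

text \<open>Coordinates are 1-based as in the paper: y_i = y ! (i - 1), i in {1..d-1}.\<close>
definition coord :: "nat list \<Rightarrow> nat \<Rightarrow> nat" where
  "coord y i = y ! (i - 1)"

definition bdry :: "nat \<Rightarrow> nat list set" where
  "bdry d = {y. length y = d - 1 \<and> (\<exists>i\<in>{1..d-1}. coord y i = 0)}"

definition kernel_equiv :: "nat \<Rightarrow> real \<Rightarrow> (nat list \<times> nat list) set" where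
  "kernel_equiv d eps0 = {(x, y). x \<in> bdry d \<and> y \<in> bdry d \<and>
                                 gap_kernel eps0 \<infinity> x = gap_kernel eps0 \<infinity> y}"

definition cells :: "nat \<Rightarrow> real \<Rightarrow> nat list set set" where
  "cells d eps0 = bdry d // kernel_equiv d eps0"

end

(* The carrier reaches ball i of the configuration with gap vector x carrying at most b_i balls,
   where b_1 = 0 and b_(i+1) = max (b_i + 1 - x_i) 0.  So at most the first b_i + 1 sites of
   gap i are ever reached by a loaded carrier; further empty sites can be removed without
   changing the law of W_1 - W_0, which therefore depends only on the truncated gap vector
   (min (x_i, b_i + 1))_i, for every eps and c.  Conversely, if c >= d the truncated gap vector
   can be read off the kernel: with positive probability the carrier picks up every ball up to
   ball i, unloads into gap i and closes it, so the least possible increment of coordinate i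
   is -x_i.  Hence the cells are the fibres of the truncation on the boundary: finitely many
   and independent of eps.  On a fibre exactly the coordinates below the truncation level are
   fixed, which gives (i) and (ii). *)

theory Submission
  imports Defs
begin

fun carrier_run :: "real \<Rightarrow> enat \<Rightarrow> nat \<Rightarrow> bool list \<Rightarrow> (bool list \<times> nat) pmf" where
  "carrier_run eps c g [] = return_pmf ([], g)"
| "carrier_run eps c g (True # w) =
     (if enat g < c then
        bind_pmf (bernoulli_pmf (1 - eps)) (\<lambda>b.
          if b then map_pmf (apfst (Cons False)) (carrier_run eps c (Suc g) w)
          else map_pmf (apfst (Cons True)) (carrier_run eps c g w))
      else map_pmf (apfst (Cons True)) (carrier_run eps c g w))"
| "carrier_run eps c g (False # w) =
     (if 1 \<le> g then map_pmf (apfst (Cons True)) (carrier_run eps c (g - 1) w)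
      else map_pmf (apfst (Cons False)) (carrier_run eps c g w))"

lemma sbbs_run_eq_map_fst_carrier_run: "sbbs_run eps c g w = map_pmf fst (carrier_run eps c g w)"
  by (induction eps c g w rule: carrier_run.induct)
     (auto simp: map_bind_pmf pmf.map_comp o_def intro!: bind_pmf_cong)

lemma carrier_run_append:
  "carrier_run eps c g (u @ w) =
     bind_pmf (carrier_run eps c g u) (\<lambda>(ou, h). map_pmf (apfst ((@) ou)) (carrier_run eps c h w))"
  by (induction eps c g u rule: carrier_run.induct)
     (auto simp: bind_return_pmf map_bind_pmf bind_map_pmf bind_assoc_pmf pmf.map_comp o_def
        split_beta apfst_def map_prod_def intro!: bind_pmf_cong)

lemma carrier_run_append_mem:
  assumes "(ou, h) \<in> set_pmf (carrier_run eps c g u)" and "(ow, h') \<in> set_pmf (carrier_run eps c h w)"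
  shows "(ou @ ow, h') \<in> set_pmf (carrier_run eps c g (u @ w))"
  using assms by (force simp: carrier_run_append)

fun max_load :: "nat \<Rightarrow> bool list \<Rightarrow> nat" where
  "max_load g [] = g"
| "max_load g (True # w) = max_load (Suc g) w"
| "max_load g (False # w) = max_load (g - 1) w"

lemma max_load_mono: "g \<le> g' \<Longrightarrow> max_load g w \<le> max_load g' w"
  by (induction g w arbitrary: g' rule: max_load.induct) auto

lemma max_load_append: "max_load g (u @ w) = max_load (max_load g u) w"
  by (induction g u rule: max_load.induct) auto

lemma max_load_replicate_False: "max_load g (replicate n False) = g - n"
  by (induction n arbitrary: g) auto

lemma carrier_run_invariant:
  assumes "(ow, h) \<in> set_pmf (carrier_run eps c g w)"
  shows "h \<le> max_load g w \<and> count_list ow True + h = count_list w True + g"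
  using assms
proof (induction eps c g w arbitrary: ow h rule: carrier_run.induct)
  case (2 eps c g w)
  have "max_load g w \<le> max_load (Suc g) w" by (simp add: max_load_mono)
  with 2 show ?case by (auto split: if_splits) force+
next
  case (3 eps c g w)
  then show ?case by (cases "g = 0") (auto split: if_splits)
qed simp

lemma carrier_run_unload:
  "n \<le> g \<Longrightarrow> (replicate n True, g - n) \<in> set_pmf (carrier_run eps c g (replicate n False))"
proof (induction n arbitrary: g)
  case (Suc n)
  then have "(replicate n True, g - Suc n) \<in> set_pmf (carrier_run eps c (g - 1) (replicate n False))"
    using Suc.IH[of "g - 1"] by simp
  with Suc.prems show ?case by force
qed simp

lemma carrier_run_pick:
  "0 < eps \<Longrightarrow> eps < 1 \<Longrightarrow> enat g < c \<Longrightarrow> ([False], Suc g) \<in> set_pmf (carrier_run eps c g [True])"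
  by auto

lemma carrier_run_keep:
  "0 < eps \<Longrightarrow> eps < 1 \<Longrightarrow> ([True], g) \<in> set_pmf (carrier_run eps c g [True])"
  by auto

lemma carrier_run_unload_all:
  assumes "n \<le> count_list w False" and "0 < eps" and "eps < 1"
  shows "\<exists>ow h. (replicate n True @ ow, h) \<in> set_pmf (carrier_run eps c n w)"
  using assms(1)
proof (induction w arbitrary: n)
  case Nil
  then show ?case by auto
next
  case (Cons b w)
  show ?case
  proof (cases n)
    case 0
    obtain p where "p \<in> set_pmf (carrier_run eps c n (b # w))"
      using set_pmf_not_empty by fast
    with 0 show ?thesis by (cases p) auto
  next
    case (Suc m)
    show ?thesis
    proof (cases b)
      case True
      with Cons.prems have "n \<le> count_list w False" by simp
      then obtain ow h where "(replicate n True @ ow, h) \<in> set_pmf (carrier_run eps c n w)"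
        using Cons.IH by blast
      then have "([True] @ replicate n True @ ow, h) \<in> set_pmf (carrier_run eps c n ([True] @ w))"
        by (rule carrier_run_append_mem[OF carrier_run_keep[OF assms(2,3)]])
      then have "(replicate n True @ True # ow, h) \<in> set_pmf (carrier_run eps c n (b # w))"
        using True by (simp add: replicate_app_Cons_same)
      then show ?thesis by blast
    next
      case False
      with Cons.prems Suc have "m \<le> count_list w False" by simp
      then obtain ow h where "(replicate m True @ ow, h) \<in> set_pmf (carrier_run eps c m w)"
        using Cons.IH by blast
      with False Suc show ?thesis by force
    qed
  qed
qed

section \<open>Load bounds and truncated gap vectors\<close>

(* A carrier reaching a ball with load at most m, followed by the gaps xs, reaches the ball
   after them with load at most load_bound m xs. *)
fun load_bound :: "nat \<Rightarrow> nat list \<Rightarrow> nat" where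
  "load_bound m [] = m"
| "load_bound m (y # ys) = load_bound (Suc m - y) ys"

fun truncate_gaps :: "nat \<Rightarrow> nat list \<Rightarrow> nat list" where
  "truncate_gaps m [] = []"
| "truncate_gaps m (y # ys) = min y (Suc m) # truncate_gaps (Suc m - y) ys"

lemma length_truncate_gaps [simp]: "length (truncate_gaps m xs) = length xs"
  by (induction m xs rule: truncate_gaps.induct) auto

lemma load_bound_append: "load_bound m (xs @ ys) = load_bound (load_bound m xs) ys"
  by (induction m xs rule: load_bound.induct) auto

lemma truncate_gaps_append:
  "truncate_gaps m (xs @ ys) = truncate_gaps m xs @ truncate_gaps (load_bound m xs) ys"
  by (induction m xs rule: truncate_gaps.induct) auto

lemma diff_min_Suc_eq: "Suc m - min y (Suc m) = Suc m - y"
  by (simp add: min_def)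

lemma truncate_gaps_idem: "truncate_gaps m (truncate_gaps m xs) = truncate_gaps m xs"
  by (induction m xs rule: truncate_gaps.induct) (auto simp: diff_min_Suc_eq)

lemma nth_truncate_gaps:
  "i < length xs \<Longrightarrow> truncate_gaps m xs ! i = min (xs ! i) (Suc (load_bound m (take i xs)))"
  by (induction m xs arbitrary: i rule: truncate_gaps.induct) (auto simp: nth_Cons split: nat.splits)

lemma truncate_gaps_eq_self_iff:
  "truncate_gaps m xs = xs \<longleftrightarrow> (\<forall>i<length xs. xs ! i \<le> Suc (load_bound m (take i xs)))"
proof
  assume "truncate_gaps m xs = xs"
  then show "\<forall>i<length xs. xs ! i \<le> Suc (load_bound m (take i xs))"
    by (metis min.cobounded2 nth_truncate_gaps)
qed (simp add: list_eq_iff_nth_eq nth_truncate_gaps)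

lemma load_bound_le: "load_bound m xs \<le> m + length xs"
  by (induction m xs rule: load_bound.induct) (simp, fastforce)

lemma set_truncate_gaps_subset: "set (truncate_gaps m xs) \<subseteq> {..m + length xs}"
proof (induction m xs rule: truncate_gaps.induct)
  case (2 m y ys)
  have "Suc m - y + length ys \<le> m + Suc (length ys)" by arith
  with 2 show ?case by (auto simp: min_def)
qed simp

lemma truncate_gaps_eq_iff:
  assumes "truncate_gaps m t = t" and "length y = length t"
  shows "truncate_gaps m y = t \<longleftrightarrow>
    (\<forall>i<length t. if t ! i \<le> load_bound m (take i t) then y ! i = t ! i else t ! i \<le> y ! i)"
  using assms
proof (induction t arbitrary: m y)
  case (Cons t0 ts)
  obtain y0 ys where y: "y = y0 # ys" using Cons.prems(2) by (cases y) auto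
  have t0: "t0 \<le> Suc m" and ts: "truncate_gaps (Suc m - t0) ts = ts"
    using Cons.prems(1) by (auto simp: min_def split: if_splits)
  have head: "min y0 (Suc m) = t0 \<longleftrightarrow> (if t0 \<le> m then y0 = t0 else t0 \<le> y0)"
    using t0 by (auto simp: min_def)
  have "truncate_gaps m y = t0 # ts \<longleftrightarrow>
      min y0 (Suc m) = t0 \<and> truncate_gaps (Suc m - t0) ys = ts"
    using y diff_min_Suc_eq[of m y0] by auto
  then show ?case
    using Cons.IH[OF ts] Cons.prems(2) head y by (simp add: All_less_Suc2)
qed simp

lemma truncate_gaps_decrement:
  assumes "i < length x" and "Suc (load_bound m (take i x)) < x ! i"
  shows "truncate_gaps m (x[i := x ! i - 1]) = truncate_gaps m x"
proof -
  have "truncate_gaps m (take i x @ (x ! i - 1) # drop (Suc i) x) =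
      truncate_gaps m (take i x @ x ! i # drop (Suc i) x)"
    using assms(2) by (simp add: truncate_gaps_append min_def; arith)
  then show ?thesis
    using assms(1) by (metis id_take_nth_drop upd_conv_take_nth_drop)
qed

lemma ball_positions_Cons:
  "ball_positions (b # w) =
     (if b then 0 # map Suc (ball_positions w) else map Suc (ball_positions w))"
  by (simp add: ball_positions_def upt_conv_Cons map_Suc_upt[symmetric] filter_map o_def
      del: upt_Suc)

lemma ball_positions_Nil [simp]: "ball_positions [] = []"
  by (simp add: ball_positions_def)

lemma ball_positions_append:
  "ball_positions (u @ w) = ball_positions u @ map (\<lambda>p. p + length u) (ball_positions w)"
  by (induction u) (auto simp: ball_positions_Cons o_def)

lemma length_ball_positions: "length (ball_positions w) = count_list w True"
  by (induction w) (auto simp: ball_positions_Cons)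

lemma ball_positions_less_length: "p \<in> set (ball_positions w) \<Longrightarrow> p < length w"
  by (simp add: ball_positions_def)

lemma ball_positions_replicate_True: "ball_positions (replicate n True) = [0..<n]"
  by (induction n) (auto simp: ball_positions_Cons map_Suc_upt upt_conv_Cons)

lemma length_gaps_of: "length (gaps_of w) = count_list w True - 1"
  by (simp add: gaps_of_def Let_def length_ball_positions)

lemma nth_gaps_of:
  "j < length (gaps_of w) \<Longrightarrow> gaps_of w ! j = ball_positions w ! Suc j - ball_positions w ! j - 1"
  by (simp add: gaps_of_def Let_def nth_tl)

lemma gaps_of_insert_empty:
  assumes "count_list u True = Suc n"
  shows "gaps_of (u @ False # w) = (gaps_of (u @ w))[n := Suc (gaps_of (u @ w) ! n)]"
proof -
  let ?f = "\<lambda>p. if p < length u then p else Suc p"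
  let ?ps = "ball_positions (u @ w)"
  have "map ?f (ball_positions u) = ball_positions u"
    by (rule map_idI) (simp add: ball_positions_less_length)
  then have ps: "ball_positions (u @ False # w) = map ?f ?ps"
    by (simp add: ball_positions_append ball_positions_Cons o_def)
  have "ball_positions u ! k < length u" if "k \<le> n" for k
    using that assms by (metis ball_positions_less_length length_ball_positions le_imp_less_Suc nth_mem)
  then have below: "?ps ! k < length u \<longleftrightarrow> k \<le> n" if "k < length ?ps" for k
    using that assms by (auto simp: ball_positions_append nth_append length_ball_positions)
  show ?thesis
  proof (rule nth_equalityI)
    fix j
    assume "j < length (gaps_of (u @ False # w))"
    then have j: "j < length (gaps_of (u @ w))" and j': "Suc j < length ?ps"
      by (simp_all add: length_gaps_of length_ball_positions)
    then have "gaps_of (u @ False # w) ! j = ?f (?ps ! Suc j) - ?f (?ps ! j) - 1"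
      using nth_gaps_of[of j "u @ False # w"] by (simp add: ps length_gaps_of)
    then show "gaps_of (u @ False # w) ! j = (gaps_of (u @ w))[n := Suc (gaps_of (u @ w) ! n)] ! j"
      using below[OF j'] below[of j] j j' by (auto simp: nth_gaps_of nth_list_update)
  qed (simp add: length_gaps_of)
qed

definition gap_increments :: "nat list \<Rightarrow> bool list \<Rightarrow> int list" where
  "gap_increments x w = map2 (\<lambda>a b. int a - int b) (gaps_of w) x"

lemma gap_kernel_eq_map_gap_increments:
  "gap_kernel eps c x = map_pmf (gap_increments x) (sbbs_run eps c 0 (config_of_gaps x))"
  by (simp add: gap_kernel_def gap_increments_def [abs_def])

lemma gap_increments_insert_empty:
  assumes "count_list u True = Suc n"
  shows "gap_increments (x[n := Suc (x ! n)]) (u @ False # w) = gap_increments x (u @ w)"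
  unfolding gap_increments_def gaps_of_insert_empty[OF assms]
proof (rule nth_equalityI)
  fix i
  let ?g = "gaps_of (u @ w)"
  assume "i < length (map2 (\<lambda>a b. int a - int b) (?g[n := Suc (?g ! n)]) (x[n := Suc (x ! n)]))"
  then show "map2 (\<lambda>a b. int a - int b) (?g[n := Suc (?g ! n)]) (x[n := Suc (x ! n)]) ! i =
      map2 (\<lambda>a b. int a - int b) ?g x ! i"
    by (cases "i = n") simp_all
qed simp

section \<open>Invariance of the gap kernel under truncation\<close>

definition gap_block :: "nat \<Rightarrow> bool list" where
  "gap_block a = replicate a False @ [True]"

lemma count_list_replicate: "count_list (replicate n x) y = (if x = y then n else 0)"
  by (induction n) auto

lemma count_list_gap_blocks: "count_list (concat (map gap_block xs)) True = length xs"
  by (induction xs) (simp_all add: gap_block_def count_list_replicate)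

lemma max_load_gap_blocks: "max_load (Suc m) (concat (map gap_block xs)) = Suc (load_bound m xs)"
  by (induction xs arbitrary: m) (simp_all add: gap_block_def max_load_append max_load_replicate_False)

lemma config_of_gaps_split:
  assumes "i < length x"
  defines "u \<equiv> True # concat (map gap_block (take i x)) @ replicate (x ! i) False"
    and "v \<equiv> True # concat (map gap_block (drop (Suc i) x)) @ replicate (length x + 1) False"
  shows "config_of_gaps x = u @ v"
    and "config_of_gaps (x[i := Suc (x ! i)]) = u @ False # v"
proof -
  have config: "config_of_gaps x' = True # concat (map gap_block x') @ replicate (length x' + 1) False"
    for x'
    by (simp add: config_of_gaps_def gap_block_def [abs_def])
  have x: "x = take i x @ x ! i # drop (Suc i) x"
    and x': "x[i := Suc (x ! i)] = take i x @ Suc (x ! i) # drop (Suc i) x"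
    using assms(1) by (simp_all add: id_take_nth_drop upd_conv_take_nth_drop)
  show "config_of_gaps x = u @ v"
    unfolding config u_def v_def by (subst (1) x) (simp add: gap_block_def)
  show "config_of_gaps (x[i := Suc (x ! i)]) = u @ False # v"
    unfolding config u_def v_def by (subst (1) x') (simp add: gap_block_def replicate_append_same)
qed

lemma gap_kernel_insert_empty:
  assumes i: "i < length x" and unreachable: "Suc (load_bound 0 (take i x)) \<le> x ! i"
  shows "gap_kernel eps c (x[i := Suc (x ! i)]) = gap_kernel eps c x"
proof -
  define u where "u = True # concat (map gap_block (take i x)) @ replicate (x ! i) False"
  define v where "v = True # concat (map gap_block (drop (Suc i) x)) @ replicate (length x + 1) False"
  let ?x' = "x[i := Suc (x ! i)]"
  let ?K = "\<lambda>x' w. bind_pmf (carrier_run eps c 0 u)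
              (\<lambda>p. map_pmf (\<lambda>q. gap_increments x' (fst p @ fst q)) (carrier_run eps c (snd p) w))"
  have kernel: "gap_kernel eps c x' = ?K x' w" if "config_of_gaps x' = u @ w" for x' w
    unfolding gap_kernel_eq_map_gap_increments sbbs_run_eq_map_fst_carrier_run that carrier_run_append
    by (simp add: map_bind_pmf pmf.map_comp split_beta o_def del: carrier_run.simps)
  \<comment> \<open>The carrier is empty when it reaches the inserted site, which is then left empty.\<close>
  have "max_load 0 u = 0"
    using unreachable by (simp add: u_def max_load_append max_load_gap_blocks max_load_replicate_False)
  then have u_run: "h = 0 \<and> count_list ou True = Suc i"
    if "(ou, h) \<in> set_pmf (carrier_run eps c 0 u)" for ou h
    using carrier_run_invariant[OF that] i
    by (simp add: u_def count_list_gap_blocks count_list_replicate)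
  have "gap_kernel eps c ?x' = ?K ?x' (False # v)"
    using config_of_gaps_split[OF i] by (intro kernel) (simp add: u_def v_def)
  also have "\<dots> = ?K x v"
    by (rule bind_pmf_cong)
       (auto dest!: u_run simp: pmf.map_comp o_def split_beta gap_increments_insert_empty)
  also have "\<dots> = gap_kernel eps c x"
    using config_of_gaps_split[OF i] by (intro kernel[symmetric]) (simp add: u_def v_def)
  finally show ?thesis .
qed

lemma gap_kernel_truncate_gaps: "gap_kernel eps c (truncate_gaps 0 x) = gap_kernel eps c x"
proof (induction "sum_list x" arbitrary: x rule: less_induct)
  case less
  show ?case
  proof (cases "truncate_gaps 0 x = x")
    case False
    then obtain i where i: "i < length x" and big: "Suc (load_bound 0 (take i x)) < x ! i"
      by (auto simp: truncate_gaps_eq_self_iff not_le)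
    define x' where "x' = x[i := x ! i - 1]"
    have "x'[i := Suc (x' ! i)] = x" and "take i x' = take i x"
      using i big by (simp_all add: x'_def)
    then have "gap_kernel eps c x' = gap_kernel eps c x"
      using gap_kernel_insert_empty[of i x' eps c] i big by (simp add: x'_def)
    moreover have "truncate_gaps 0 x' = truncate_gaps 0 x"
      using truncate_gaps_decrement[OF i big] by (simp add: x'_def)
    moreover have "sum_list x' < sum_list x"
      using i big elem_le_sum_list[OF i] by (simp add: x'_def sum_list_update)
    ultimately show ?thesis
      using less.hyps[of x'] by simp
  qed simp
qed

section \<open>Separation of truncated gap vectors\<close>

lemma carrier_run_attains_load_bound:
  assumes "truncate_gaps m xs = xs" and "enat (m + length xs) < c" and "0 < eps" and "eps < 1"
  shows "\<exists>ow. (ow, Suc (load_bound m xs)) \<in> set_pmf (carrier_run eps c (Suc m) (concat (map gap_block xs)))"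
  using assms(1,2)
proof (induction xs arbitrary: m)
  case (Cons y ys)
  have y: "y \<le> Suc m" and ys: "truncate_gaps (Suc m - y) ys = ys"
    using Cons.prems(1) by (auto simp: min_def split: if_splits)
  have "enat (Suc m - y) < c" and "enat (Suc m - y + length ys) < c"
    by (rule order.strict_trans1[OF _ Cons.prems(2)], simp)+
  then obtain ow where "(ow, Suc (load_bound (Suc m - y) ys))
      \<in> set_pmf (carrier_run eps c (Suc (Suc m - y)) (concat (map gap_block ys)))"
    using Cons.IH[OF ys] by blast
  with carrier_run_unload[OF y] carrier_run_pick[OF assms(3,4) \<open>enat (Suc m - y) < c\<close>]
  have "(replicate y True @ [False] @ ow, Suc (load_bound (Suc m - y) ys))
      \<in> set_pmf (carrier_run eps c (Suc m) (replicate y False @ [True] @ concat (map gap_block ys)))"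
    by (intro carrier_run_append_mem)
  then show ?case by (auto simp: gap_block_def[of y])
qed simp

lemma gaps_of_run_of_balls:
  assumes "count_list a True \<le> j" and "Suc j < count_list a True + n"
  shows "j < length (gaps_of (a @ replicate n True @ b)) \<and> gaps_of (a @ replicate n True @ b) ! j = 0"
proof -
  let ?ps = "ball_positions (a @ replicate n True @ b)"
  have "?ps ! k = length a + (k - count_list a True)"
    if "count_list a True \<le> k" "k < count_list a True + n" for k
    using that by (auto simp: ball_positions_append ball_positions_replicate_True length_ball_positions
        nth_append)
  with assms show ?thesis
    by (simp add: nth_gaps_of length_gaps_of count_list_replicate)
qed

lemma carrier_run_fills_gap:
  assumes s: "truncate_gaps 0 s = s" and j: "j < length s"
    and c: "enat (length s + 1) \<le> c" and eps: "0 < eps" "eps < 1"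
  shows "\<exists>a L. (a @ replicate (Suc (s ! j)) True, L) \<in> set_pmf (carrier_run eps c 0
            (True # concat (map gap_block (take j s)) @ replicate (s ! j) False @ [True]))
          \<and> L \<le> Suc j"
proof -
  define M where "M = load_bound 0 (take j s)"
  have "s ! j \<le> Suc M"
    using s j by (simp add: M_def truncate_gaps_eq_self_iff)
  have "truncate_gaps 0 (take j s) = take j s"
    using s by (simp add: truncate_gaps_eq_self_iff min_def)
  moreover have "enat (0 + length (take j s)) < c" and "enat 0 < c"
    using j by (auto intro: order.strict_trans2[OF _ c])
  ultimately obtain o1 where
    o1: "(o1, Suc M) \<in> set_pmf (carrier_run eps c (Suc 0) (concat (map gap_block (take j s))))"
    using carrier_run_attains_load_bound[OF _ _ eps] by (fastforce simp: M_def)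
  have "([False] @ o1 @ replicate (s ! j) True @ [True], Suc M - s ! j) \<in> set_pmf (carrier_run eps c 0
      ([True] @ concat (map gap_block (take j s)) @ replicate (s ! j) False @ [True]))"
    by (rule carrier_run_append_mem[OF carrier_run_pick[OF eps \<open>enat 0 < c\<close>]
          carrier_run_append_mem[OF o1 carrier_run_append_mem[OF carrier_run_unload
            carrier_run_keep[OF eps]]]]) fact
  moreover have "M \<le> j"
    using load_bound_le[of 0 "take j s"] j by (simp add: M_def)
  ultimately show ?thesis
    by (intro exI[of _ "False # o1"] exI[of _ "Suc M - s ! j"]) (simp add: replicate_append_same)
qed

(* Pick up every ball up to ball j, unload into gap j, keep ball j + 1 and unload the rest of
   the load right behind it: balls j and j + 1 of the new configuration are then adjacent. *)
lemma gap_kernel_closes_gap: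
  assumes s: "truncate_gaps 0 s = s" and j: "j < length s" and "1 \<le> s ! j"
    and c: "enat (length s + 1) \<le> c" and eps: "0 < eps" "eps < 1"
  shows "\<exists>\<delta> \<in> set_pmf (gap_kernel eps c s). j < length \<delta> \<and> \<delta> ! j = - int (s ! j)"
proof -
  define u where "u = True # concat (map gap_block (take j s)) @ replicate (s ! j) False @ [True]"
  define v where "v = concat (map gap_block (drop (Suc j) s)) @ replicate (length s + 1) False"
  obtain a L where prefix: "(a @ replicate (Suc (s ! j)) True, L) \<in> set_pmf (carrier_run eps c 0 u)"
    and "L \<le> Suc j"
    using carrier_run_fills_gap[OF s j c eps] by (auto simp: u_def)
  then have count: "count_list a True + Suc (s ! j) + L = Suc (Suc j)"
    using carrier_run_invariant[OF prefix] j by (simp add: u_def count_list_gap_blocks count_list_replicate)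
  have "L \<le> count_list v False"
    using \<open>L \<le> Suc j\<close> j by (simp add: v_def count_list_replicate)
  then obtain o2 h where "(replicate L True @ o2, h) \<in> set_pmf (carrier_run eps c L v)"
    using carrier_run_unload_all[OF _ eps] by blast
  from carrier_run_append_mem[OF prefix this]
  have "(a @ replicate (Suc (s ! j) + L) True @ o2, h) \<in> set_pmf (carrier_run eps c 0 (u @ v))"
    by (simp add: replicate_add)
  moreover have "config_of_gaps s = u @ v"
    using config_of_gaps_split(1)[OF j] by (simp add: u_def v_def)
  ultimately have "a @ replicate (Suc (s ! j) + L) True @ o2 \<in> set_pmf (sbbs_run eps c 0 (config_of_gaps s))"
    by (force simp: sbbs_run_eq_map_fst_carrier_run)
  moreover have "j < length (gaps_of (a @ replicate (Suc (s ! j) + L) True @ o2)) \<and>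
      gaps_of (a @ replicate (Suc (s ! j) + L) True @ o2) ! j = 0"
    using gaps_of_run_of_balls[of a j "Suc (s ! j) + L" o2] count \<open>1 \<le> s ! j\<close> by simp
  ultimately show ?thesis
    using j by (force simp: gap_kernel_eq_map_gap_increments gap_increments_def)
qed

lemma gap_kernel_increment_ge:
  "\<delta> \<in> set_pmf (gap_kernel eps c x) \<Longrightarrow> j < length \<delta> \<Longrightarrow> - int (x ! j) \<le> \<delta> ! j"
  by (auto simp: gap_kernel_eq_map_gap_increments gap_increments_def)

lemma gap_kernel_neq_of_less:
  assumes s: "truncate_gaps 0 s = s" and j: "j < length s" and less: "t ! j < s ! j"
    and c: "enat (length s + 1) \<le> c" and eps: "0 < eps" "eps < 1"
  shows "gap_kernel eps c t \<noteq> gap_kernel eps c s"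
proof
  assume "gap_kernel eps c t = gap_kernel eps c s"
  moreover obtain \<delta> where "\<delta> \<in> set_pmf (gap_kernel eps c s)" "j < length \<delta>" "\<delta> ! j = - int (s ! j)"
    using gap_kernel_closes_gap[OF s j _ c eps] less by auto
  ultimately show False
    using gap_kernel_increment_ge[of \<delta> eps c t j] less by simp
qed

lemma gap_kernel_neq:
  assumes len: "length x = length y" and ne: "truncate_gaps 0 x \<noteq> truncate_gaps 0 y"
    and c: "enat (length x + 1) \<le> c" and eps: "0 < eps" "eps < 1"
  shows "gap_kernel eps c x \<noteq> gap_kernel eps c y"
proof -
  let ?s = "truncate_gaps 0 x" and ?t = "truncate_gaps 0 y"
  obtain j where j: "j < length x" and neq: "?s ! j \<noteq> ?t ! j"
    using ne len nth_equalityI[of ?s ?t] by auto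
  then consider "?s ! j < ?t ! j" | "?t ! j < ?s ! j"
    by linarith
  then have "gap_kernel eps c ?s \<noteq> gap_kernel eps c ?t"
  proof cases
    case 1
    with j len c show ?thesis
      using gap_kernel_neq_of_less[of ?t j ?s c eps] eps by (simp add: truncate_gaps_idem)
  next
    case 2
    with j c show ?thesis
      using gap_kernel_neq_of_less[of ?s j ?t c eps] eps by (simp add: truncate_gaps_idem)
  qed
  then show ?thesis
    by (simp add: gap_kernel_truncate_gaps)
qed

section \<open>Cells\<close>

lemma gap_kernel_eq_iff_truncate_gaps_eq:
  assumes "length x = length y" and "enat (length x + 1) \<le> c" and "0 < eps" and "eps < 1"
  shows "gap_kernel eps c x = gap_kernel eps c y \<longleftrightarrow> truncate_gaps 0 x = truncate_gaps 0 y"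
  using gap_kernel_neq[OF assms(1) _ assms(2-4)] gap_kernel_truncate_gaps[of eps c] by metis

definition truncation_fibre :: "nat \<Rightarrow> nat list \<Rightarrow> nat list set" where
  "truncation_fibre d t = {y \<in> bdry d. truncate_gaps 0 y = t}"

lemma length_bdry: "y \<in> bdry d \<Longrightarrow> length y = d - 1"
  by (simp add: bdry_def)

lemma cells_eq_truncation_fibres:
  assumes "0 < eps" and "eps < 1"
  shows "cells d eps = (\<lambda>x. truncation_fibre d (truncate_gaps 0 x)) ` bdry d"
proof -
  have "kernel_equiv d eps `` {x} = truncation_fibre d (truncate_gaps 0 x)" if "x \<in> bdry d" for x
    using that gap_kernel_eq_iff_truncate_gaps_eq[OF _ _ assms, of x]
    by (auto simp: kernel_equiv_def truncation_fibre_def length_bdry)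
  then show ?thesis
    by (auto simp: cells_def quotient_def)
qed

lemma finite_cells:
  assumes "0 < eps" and "eps < 1"
  shows "finite (cells d eps)"
proof -
  have "truncate_gaps 0 ` bdry d \<subseteq> {xs. set xs \<subseteq> {..d} \<and> length xs = d - 1}"
    using set_truncate_gaps_subset[of 0] by (fastforce simp: length_bdry)
  then have "finite (truncate_gaps 0 ` bdry d)"
    using finite_lists_length_eq[of "{..d}" "d - 1"] finite_subset by blast
  then show ?thesis
    unfolding cells_eq_truncation_fibres[OF assms] image_image[symmetric] by blast
qed

lemma cell_eq_truncation_fibre:
  assumes "0 < eps" and "eps < 1" and "p \<in> cells d eps" and "x \<in> p"
  shows "x \<in> bdry d \<and> p = truncation_fibre d (truncate_gaps 0 x)"
  using assms by (auto simp: cells_eq_truncation_fibres truncation_fibre_def)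

lemma gap_kernel_eq_on_cell:
  assumes "0 < eps0" and "eps0 < 1" and "p \<in> cells d eps0" and "x \<in> p" and "y \<in> p"
  shows "gap_kernel eps c x = gap_kernel eps c y"
  using cell_eq_truncation_fibre[OF assms(1-4)] cell_eq_truncation_fibre[OF assms(1-3,5)]
    gap_kernel_truncate_gaps[of eps c] by (metis (mono_tags) mem_Collect_eq truncation_fibre_def)

lemma gap_kernel_neq_on_distinct_cells:
  assumes "0 < eps0" and "eps0 < 1" and "p \<in> cells d eps0" and "q \<in> cells d eps0" and "p \<noteq> q"
    and "x \<in> p" and "y \<in> q" and "enat d \<le> c" and "0 < eps" and "eps < 1"
  shows "gap_kernel eps c x \<noteq> gap_kernel eps c y"
proof -
  have x: "x \<in> bdry d" "p = truncation_fibre d (truncate_gaps 0 x)"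
    and y: "y \<in> bdry d" "q = truncation_fibre d (truncate_gaps 0 y)"
    using cell_eq_truncation_fibre assms by blast+
  then have "1 \<le> d" and "length x = length y"
    by (auto simp: bdry_def)
  with x y assms(5,8-10) show ?thesis
    by (auto simp: gap_kernel_eq_iff_truncate_gaps_eq length_bdry)
qed

definition tight_coords :: "nat list \<Rightarrow> nat set" where
  "tight_coords x = {i \<in> {1..length x}. coord x i \<le> load_bound 0 (take (i - 1) x)}"

lemma tight_coords_subset: "tight_coords x \<subseteq> {1..length x}"
  by (auto simp: tight_coords_def)

lemma truncation_fibre_eq:
  assumes x: "truncate_gaps 0 x = x" and len: "length x = d - 1"
  shows "truncation_fibre d x = {y \<in> bdry d. (\<forall>i\<in>tight_coords x. coord y i = coord x i)
                                 \<and> (\<forall>i\<in>{1..d-1} - tight_coords x. coord x i \<le> coord y i)}"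
proof -
  have "truncate_gaps 0 y = x \<longleftrightarrow> (\<forall>i\<in>tight_coords x. coord y i = coord x i)
                                 \<and> (\<forall>i\<in>{1..d-1} - tight_coords x. coord x i \<le> coord y i)"
    if "y \<in> bdry d" for y
  proof -
    let ?P = "\<lambda>k. if x ! k \<le> load_bound 0 (take k x) then y ! k = x ! k else x ! k \<le> y ! k"
    have "truncate_gaps 0 y = x \<longleftrightarrow> (\<forall>k<d - 1. ?P k)"
      using truncate_gaps_eq_iff[OF x] that len by (simp add: length_bdry)
    also have "\<dots> \<longleftrightarrow> (\<forall>i\<in>Suc ` {..<d - 1}. ?P (i - 1))"
      by auto
    also have "\<dots> \<longleftrightarrow> (\<forall>i\<in>{1..d-1}. if i \<in> tight_coords x then coord y i = coord x i
                                    else coord x i \<le> coord y i)"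
      by (simp add: image_Suc_lessThan tight_coords_def coord_def len)
    finally show ?thesis
      using tight_coords_subset[of x] len by auto
  qed
  then show ?thesis
    by (auto simp: truncation_fibre_def)
qed

lemma min_tight_coord:
  assumes x: "truncate_gaps 0 x = x" and ne: "tight_coords x \<noteq> {}"
  defines "m \<equiv> Min (tight_coords x)"
  shows "(\<forall>i. 1 \<le> i \<and> i < m \<longrightarrow> coord x i = 1) \<and> coord x m = 0"
proof -
  have fin: "finite (tight_coords x)"
    by (simp add: tight_coords_def)
  have m: "m \<in> tight_coords x" and m_le: "\<And>i. i \<in> tight_coords x \<Longrightarrow> m \<le> i"
    using Min_in[OF fin ne] Min_le[OF fin] by (simp_all add: m_def)
  then have "1 \<le> m" "m \<le> length x"
    by (simp_all add: tight_coords_def)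
  have slack: "load_bound 0 (take k x) < x ! k" if "Suc k < m" for k
    using m_le[of "Suc k"] that \<open>m \<le> length x\<close> by (force simp: tight_coords_def coord_def)
  have bound: "load_bound 0 (take k x) = 0" if "k < m" for k
    using that
  proof (induction k)
    case (Suc k)
    with \<open>m \<le> length x\<close> have "take (Suc k) x = take k x @ [x ! k]"
      by (simp add: take_Suc_conv_app_nth)
    with Suc slack[of k] show ?case
      by (simp add: load_bound_append)
  qed simp
  have "coord x i = 1" if "1 \<le> i" "i < m" for i
  proof -
    have "x ! (i - 1) \<le> Suc (load_bound 0 (take (i - 1) x))"
      using x that \<open>m \<le> length x\<close> by (simp add: truncate_gaps_eq_self_iff)
    with slack[of "i - 1"] bound[of "i - 1"] that show ?thesis
      by (simp add: coord_def)
  qed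
  moreover have "coord x m = 0"
    using m bound[of "m - 1"] \<open>1 \<le> m\<close> by (simp add: tight_coords_def)
  ultimately show ?thesis
    by blast
qed

lemma cell_shape:
  assumes "0 < eps" and "eps < 1" and "p \<in> cells d eps"
  shows "\<exists>x I. x \<in> bdry d \<and> I \<subseteq> {1..d-1} \<and> I \<noteq> {}
         \<and> (\<forall>i. 1 \<le> i \<and> i < Min I \<longrightarrow> coord x i = 1) \<and> coord x (Min I) = 0
         \<and> p = {y \<in> bdry d. (\<forall>i\<in>I. coord y i = coord x i)
                            \<and> (\<forall>i\<in>{1..d-1} - I. coord x i \<le> coord y i)}"
proof -
  obtain z where z: "z \<in> bdry d" and p: "p = truncation_fibre d (truncate_gaps 0 z)"
    using assms by (auto simp: cells_eq_truncation_fibres)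
  define x where "x = truncate_gaps 0 z"
  have trunc: "truncate_gaps 0 x = x" and len: "length x = d - 1"
    using z by (simp_all add: x_def truncate_gaps_idem length_bdry)
  obtain i where i: "i \<in> {1..d-1}" and "coord z i = 0"
    using z by (auto simp: bdry_def)
  moreover have "i - 1 < length z"
    using i z by (auto simp: length_bdry)
  ultimately have "coord x i = 0"
    by (simp add: x_def coord_def nth_truncate_gaps)
  with i len have "x \<in> bdry d" and "i \<in> tight_coords x"
    by (auto simp: bdry_def tight_coords_def)
  then show ?thesis
    using truncation_fibre_eq[OF trunc len] min_tight_coord[OF trunc] tight_coords_subset[of x] len p
    by (intro exI[of _ x] exI[of _ "tight_coords x"]) (auto simp: x_def)
qed

lemma cell_of_zero_at:
  assumes "0 < eps" and "eps < 1" and j: "j \<in> {1..d-1}"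
  shows "{y \<in> bdry d. coord y j = 0 \<and> (j + 1 \<le> d - 1 \<longrightarrow> 2 \<le> coord y (j + 1))
                     \<and> (\<forall>i\<in>{1..d-1} - {j, j + 1}. 1 \<le> coord y i)} \<in> cells d eps"
proof -
  define f where "f i = (if i = j then 0 else if i = j + 1 then 2 else 1 :: nat)" for i
  define t where "t = map f [1..<d]"
  have len: "length t = d - 1"
    by (simp add: t_def)
  have nth_t: "t ! k = f (Suc k)" if "k < d - 1" for k
    using that by (simp add: t_def)
  then have coord_t: "coord t i = f i" if "i \<in> {1..d-1}" for i
    using that by (auto simp: coord_def)
  have bound: "load_bound 0 (take k t) = (if k = j then 1 else 0)" if "k \<le> d - 1" for k
    using that
  proof (induction k)
    case (Suc k)
    then have "take (Suc k) t = take k t @ [f (Suc k)]"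
      using nth_t[of k] len by (simp add: take_Suc_conv_app_nth)
    with Suc show ?case
      by (simp add: load_bound_append f_def)
  qed (use j in simp)
  have trunc: "truncate_gaps 0 t = t"
    using bound nth_t len by (auto simp: truncate_gaps_eq_self_iff f_def)
  have "tight_coords t = {j}"
    using bound coord_t len j by (auto simp: tight_coords_def f_def split: if_splits)
  then have "truncation_fibre d (truncate_gaps 0 t) =
      {y \<in> bdry d. coord y j = 0 \<and> (j + 1 \<le> d - 1 \<longrightarrow> 2 \<le> coord y (j + 1))
                     \<and> (\<forall>i\<in>{1..d-1} - {j, j + 1}. 1 \<le> coord y i)}"
    using truncation_fibre_eq[OF trunc len] coord_t j by (auto simp: trunc f_def)
  moreover have "t \<in> bdry d"
    using coord_t[OF j] len j by (auto simp: bdry_def f_def)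
  ultimately show ?thesis
    using cells_eq_truncation_fibres[OF assms(1,2)] by blast
qed

theorem lemma6p2:
  fixes d :: nat and eps0 :: real
  assumes "d \<ge> 2" and "0 < eps0" and "eps0 < 1"
  shows
   "finite (cells d eps0)
    \<and> (\<forall>eps1. 0 < eps1 \<and> eps1 < 1 \<longrightarrow> cells d eps1 = cells d eps0)
    \<and> (\<forall>eps c. 0 < eps \<and> eps < 1 \<and> 1 \<le> c \<longrightarrow>
         (\<forall>p\<in>cells d eps0. \<forall>x\<in>p. \<forall>y\<in>p. gap_kernel eps c x = gap_kernel eps c y))
    \<and> (\<forall>p\<in>cells d eps0. \<exists>x I. x \<in> bdry d \<and> I \<subseteq> {1..d-1} \<and> I \<noteq> {}
         \<and> (\<forall>i. 1 \<le> i \<and> i < Min I \<longrightarrow> coord x i = 1) \<and> coord x (Min I) = 0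
         \<and> p = {y \<in> bdry d. (\<forall>i\<in>I. coord y i = coord x i)
                            \<and> (\<forall>i\<in>{1..d-1} - I. coord x i \<le> coord y i)})
    \<and> (\<forall>j\<in>{1..d-1}.
         {y \<in> bdry d. coord y j = 0 \<and> (j + 1 \<le> d - 1 \<longrightarrow> 2 \<le> coord y (j + 1))
                     \<and> (\<forall>i\<in>{1..d-1} - {j, j + 1}. 1 \<le> coord y i)} \<in> cells d eps0)
    \<and> (enat d \<le> c \<longrightarrow>
         (\<forall>eps. 0 < eps \<and> eps < 1 \<longrightarrow>
            (\<forall>p\<in>cells d eps0. \<forall>q\<in>cells d eps0. p \<noteq> q \<longrightarrow>
               (\<forall>x\<in>p. \<forall>y\<in>q. gap_kernel eps c x \<noteq> gap_kernel eps c y))))"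
proof (intro conjI allI impI ballI)
  show "finite (cells d eps0)"
    using finite_cells[OF assms(2,3)] .
next
  fix eps1 :: real
  assume "0 < eps1 \<and> eps1 < 1"
  then show "cells d eps1 = cells d eps0"
    using assms(2,3) by (simp add: cells_eq_truncation_fibres)
next
  fix eps :: real and c :: enat and p x y
  assume "p \<in> cells d eps0" and "x \<in> p" and "y \<in> p"
  then show "gap_kernel eps c x = gap_kernel eps c y"
    by (rule gap_kernel_eq_on_cell[OF assms(2,3)])
next
  fix eps :: real and p q x y
  assume "enat d \<le> c" and "0 < eps \<and> eps < 1" and "p \<in> cells d eps0" and "q \<in> cells d eps0"
    and "p \<noteq> q" and "x \<in> p" and "y \<in> q"
  then show "gap_kernel eps c x \<noteq> gap_kernel eps c y"
    using gap_kernel_neq_on_distinct_cells[OF assms(2,3)] by blast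
qed (use cell_shape[OF assms(2,3)] cell_of_zero_at[OF assms(2,3)] in blast)+

end
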